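(* Let $n\ge1$, $\mathcal{X}$ the simplex in $\mathbb{R}^{n+1}$, $\theta$ a kernel, $\Phi$ a Lipschitz continuous smooth function on an open neighborhood of $\mathcal{X}$, and $\eta>0$. Let $x(t)$ be an interior solution of the inertial dynamics (ID) defined for all $t\ge0$. Then the rate of change $\dot K(t)$ of the kinetic energy $K(t)=\frac12\|\dot x(t)\|^2$ is bounded from above for all $t\ge0$.
   Context: $\mathcal{X}=\{x\in\mathbb{R}^{n+1}:x_\alpha\ge0,\sum_\alpha x_\alpha=1\}$ with relative interior $\mathcal{X}^\circ$. A kernel is a $C^\infty$ function $\theta:[0,\infty)\to\mathbb{R}\cup\{+\infty\}$ with $\theta(x)<\infty$ for $x>0$, $\lim_{x\to0^+}\theta'(x)=-\infty$, $\theta''>0$, $\theta'''<0$ on $(0,\infty)$. The norm is $\|\dot x\|^2=\sum_\alpha\theta''(x_\alpha)\dot x_\alpha^2$. With $\theta''_\alpha=\theta''(x_\alpha)$, $\theta'''_\alpha=\theta'''(x_\alpha)$, $\Theta''=(\sum_\beta1/\theta''_\beta)^{-1}$, $v_\alpha=\partial\Phi/\partial x_\alpha$, the inertial dynamics (ID) on $\mathcal{X}^\circ$ are $$\ddot x_\alpha=\frac{1}{\theta''_\alpha}\Big[v_\alpha-\sum_{\beta}\frac{\Theta''}{\theta''_\beta}v_\beta\Big]-\frac{1}{2\theta''_\alpha}\Big[\theta'''_\alpha\dot x_\alpha^2-\sum_\beta\frac{\Theta''}{\theta''_\beta}\theta'''_\beta\dot x_\beta^2\Big]-\eta\dot x_\alpha.$$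 *)

theory Defs
  imports "HOL-Analysis.Analysis"
begin

text \<open>A kernel: only its restriction to (0,\<infinity>) enters the dynamics. We require
  C-infinity on (0,\<infinity>), theta' tends to -\<infinity> at 0+, theta''>0 and theta'''<0.\<close>
definition is_kernel :: "(real \<Rightarrow> real) \<Rightarrow> bool" where
  "is_kernel \<theta> \<longleftrightarrow>
     (\<forall>x>0. \<forall>k. ((deriv ^^ k) \<theta>) differentiable (at x)) \<and>
     filterlim (deriv \<theta>) at_bot (at_right 0) \<and>
     (\<forall>x>0. (deriv ^^ 2) \<theta> x > 0) \<and>
     (\<forall>x>0. (deriv ^^ 3) \<theta> x < 0)"

definition std_simplex :: "(real^('n::finite)) set" where
  "std_simplex = {x. (\<forall>i. x $ i \<ge> 0) \<and> (\<Sum>i\<in>UNIV. x $ i) = 1}"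

definition std_simplex_int :: "(real^('n::finite)) set" where
  "std_simplex_int = {x. (\<forall>i. x $ i > 0) \<and> (\<Sum>i\<in>UNIV. x $ i) = 1}"

definition pd :: "'n \<Rightarrow> (real^('n::finite) \<Rightarrow> real) \<Rightarrow> real^'n \<Rightarrow> real" where
  "pd i f x = deriv (\<lambda>t. f (x + t *\<^sub>R axis i 1)) 0"

fun pds :: "'n list \<Rightarrow> (real^('n::finite) \<Rightarrow> real) \<Rightarrow> real^'n \<Rightarrow> real" where
  "pds [] f = f"
| "pds (i # is) f = pd i (pds is f)"

definition smooth_on :: "(real^('n::finite)) set \<Rightarrow> (real^'n \<Rightarrow> real) \<Rightarrow> bool" where
  "smooth_on U f \<longleftrightarrow>
     (\<forall>is. continuous_on U (pds is f) \<and>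
       (\<forall>x\<in>U. \<forall>i. (\<lambda>t. pds is f (x + t *\<^sub>R axis i 1)) differentiable (at 0)))"

definition ID_rhs :: "(real \<Rightarrow> real) \<Rightarrow> (real^('n::finite) \<Rightarrow> real) \<Rightarrow> real \<Rightarrow> real^'n \<Rightarrow> real^'n \<Rightarrow> real^'n" where
  "ID_rhs \<theta> \<Phi> \<eta> x xd = (\<chi> a.
     (let th2 = (\<lambda>b. (deriv ^^ 2) \<theta> (x $ b));
          th3 = (\<lambda>b. (deriv ^^ 3) \<theta> (x $ b));
          v = (\<lambda>b. pd b \<Phi> x);
          Th = 1 / (\<Sum>b\<in>UNIV. 1 / th2 b)
      in (1 / th2 a) * (v a - (\<Sum>b\<in>UNIV. Th / th2 b * v b))
         - (1 / (2 * th2 a)) * (th3 a * (xd $ a)\<^sup>2 - (\<Sum>b\<in>UNIV. Th / th2 b * th3 b * (xd $ b)\<^sup>2))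
         - \<eta> * xd $ a))"

text \<open>Kinetic energy K = 1/2 ||xd||^2 in the Hessian metric at x.\<close>
definition kinetic :: "(real \<Rightarrow> real) \<Rightarrow> real^('n::finite) \<Rightarrow> real^'n \<Rightarrow> real" where
  "kinetic \<theta> x xd = (1/2) * (\<Sum>a\<in>UNIV. (deriv ^^ 2) \<theta> (x $ a) * (xd $ a)\<^sup>2)"

end

theory Submission imports Defs begin

text \<open>Differentiating K along a solution produces the term 1/2 sum_a theta'''_a xd_a^3, which
  cancels against the quadratic-velocity term of (ID); the remaining constraint terms of (ID) are
  multiples of 1/theta''_a and pair to zero with the velocity, since the velocity sums to zero.
  Hence dot K = sum_a (xd_a v_a - eta theta''_a xd_a^2). Completing the square bounds each summand
  by v_a^2 / (4 eta theta''_a); the Lipschitz constant L bounds |v_a|, and since theta''' < 0 and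
  0 < x_a \<le> 1 we have theta''_a \<ge> theta''(1) > 0. So dot K \<le> (n+1) L^2 / (4 eta theta''(1)).\<close>

lemma has_vector_derivative_vec_nth:
  fixes x :: "real \<Rightarrow> real^'n"
  assumes "(x has_vector_derivative v) F"
  shows "((\<lambda>s. x s $ a) has_real_derivative v $ a) F"
proof -
  have "((\<lambda>s. x s $ a) has_derivative (\<lambda>h. (h *\<^sub>R v) $ a)) F"
    using bounded_linear.has_derivative[OF bounded_linear_vec_nth
        assms[unfolded has_vector_derivative_def]] .
  moreover have "(\<lambda>h. (h *\<^sub>R v) $ a) = (*) (v $ a)" by (auto simp: fun_eq_iff)
  ultimately show ?thesis by (simp add: has_field_derivative_def)
qed

lemma at_within_atLeast_nontrivial:
  fixes a t :: real
  assumes "a \<le> t"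
  shows "at t within {a..} \<noteq> bot"
  by (metis assms at_le atLeast_subset_iff at_within_Ici_at_right
      trivial_limit_at_right_real bot_unique)

lemma pd_abs_le_lipschitz:
  fixes \<Phi> :: "real^'n \<Rightarrow> real"
  assumes "open U" "x \<in> U" "L-lipschitz_on U \<Phi>"
    and "(\<lambda>t. \<Phi> (x + t *\<^sub>R axis i 1)) differentiable (at 0)"
  shows "\<bar>pd i \<Phi> x\<bar> \<le> L"
proof -
  let ?g = "\<lambda>t. \<Phi> (x + t *\<^sub>R axis i 1)"
  have "(?g has_real_derivative pd i \<Phi> x) (at 0)"
    unfolding pd_def using assms(4) DERIV_deriv_iff_real_differentiable by blast
  hence quotient: "((\<lambda>y. (?g y - ?g 0) / (y - 0)) \<longlongrightarrow> pd i \<Phi> x) (at 0)"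
    by (simp add: has_field_derivative_iff)
  obtain e where e: "e > 0" "ball x e \<subseteq> U" using assms(1,2) open_contains_ball by blast
  have "\<bar>(?g y - ?g 0) / (y - 0)\<bar> \<le> L" if y: "0 < \<bar>y\<bar>" "\<bar>y\<bar> < e" for y
  proof -
    have "x + y *\<^sub>R axis i 1 \<in> U" using y e by (auto simp: dist_norm)
    hence "dist (?g y) (?g 0) \<le> L * dist (x + y *\<^sub>R axis i 1) (x + 0 *\<^sub>R axis i 1)"
      using assms(2,3) lipschitz_onD by fastforce
    hence "\<bar>?g y - ?g 0\<bar> \<le> L * \<bar>y\<bar>" by (simp add: dist_norm)
    thus ?thesis using y by (simp add: abs_divide pos_divide_le_eq)
  qed
  hence "eventually (\<lambda>y. \<bar>(?g y - ?g 0) / (y - 0)\<bar> \<le> L) (at 0)"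
    unfolding eventually_at using e by (auto simp: dist_norm)
  thus ?thesis
    by (rule tendsto_upperbound[OF tendsto_rabs[OF quotient]]) simp
qed

lemma smooth_on_partial_differentiable:
  assumes "smooth_on U f" "x \<in> U"
  shows "(\<lambda>t. f (x + t *\<^sub>R axis i 1)) differentiable (at 0)"
  using assms unfolding smooth_on_def by (metis pds.simps(1))

lemma std_simplex_int_subset: "std_simplex_int \<subseteq> std_simplex"
  unfolding std_simplex_int_def std_simplex_def by (auto simp: less_imp_le)

lemma std_simplex_int_component_le_1:
  assumes "x \<in> std_simplex_int"
  shows "x $ a \<le> 1"
proof -
  have "x $ a \<le> (\<Sum>b\<in>UNIV. x $ b)"
    using assms by (intro member_le_sum) (auto simp: std_simplex_int_def less_imp_le)
  thus ?thesis using assms by (simp add: std_simplex_int_def)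
qed

lemma velocity_sum_zero:
  fixes x :: "real \<Rightarrow> real^'n"
  assumes "\<forall>s\<ge>0. x s \<in> std_simplex_int" "t \<ge> 0"
    and "(x has_vector_derivative xd) (at t within {0..})"
  shows "(\<Sum>a\<in>UNIV. xd $ a) = 0"
proof (rule has_field_derivative_unique[OF _ _ at_within_atLeast_nontrivial[OF \<open>t \<ge> 0\<close>]])
  show "((\<lambda>s. \<Sum>a\<in>UNIV. x s $ a) has_real_derivative (\<Sum>a\<in>UNIV. xd $ a)) (at t within {0..})"
    by (intro DERIV_sum has_vector_derivative_vec_nth assms(3))
  show "((\<lambda>s. \<Sum>a\<in>UNIV. x s $ a) has_real_derivative 0) (at t within {0..})"
  proof (rule has_field_derivative_transform_within[OF DERIV_const[of 1] zero_less_one])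
    show "1 = (\<Sum>a\<in>UNIV. x s $ a)" if "s \<in> {0..}" for s
      using assms(1) that by (simp add: std_simplex_int_def)
  qed (use assms(2) in simp)
qed

lemma kernel_deriv2_pos: "is_kernel \<theta> \<Longrightarrow> y > 0 \<Longrightarrow> (deriv ^^ 2) \<theta> y > 0"
  unfolding is_kernel_def by blast

lemma kernel_deriv3_neg: "is_kernel \<theta> \<Longrightarrow> y > 0 \<Longrightarrow> (deriv ^^ 3) \<theta> y < 0"
  unfolding is_kernel_def by blast

lemma kernel_deriv2_has_derivative:
  assumes "is_kernel \<theta>" "y > 0"
  shows "((deriv ^^ 2) \<theta> has_real_derivative (deriv ^^ 3) \<theta> y) (at y)"
proof -
  have "(deriv ^^ 2) \<theta> differentiable (at y)" using assms unfolding is_kernel_def by blast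
  moreover have "(deriv ^^ 3) \<theta> = deriv ((deriv ^^ 2) \<theta>)"
    by (simp add: numeral_2_eq_2 numeral_3_eq_3)
  ultimately show ?thesis using DERIV_deriv_iff_real_differentiable by simp
qed

lemma kernel_deriv2_antimono:
  assumes "is_kernel \<theta>" "0 < y" "y \<le> z"
  shows "(deriv ^^ 2) \<theta> z \<le> (deriv ^^ 2) \<theta> y"
proof (cases "y = z")
  case False
  with assms(3) have "y < z" by simp
  hence "(deriv ^^ 2) \<theta> z < (deriv ^^ 2) \<theta> y"
  proof (rule DERIV_neg_imp_decreasing)
    fix w assume "y \<le> w"
    with assms(1,2) show "\<exists>D. ((deriv ^^ 2) \<theta> has_real_derivative D) (at w) \<and> D < 0"
      by (intro exI[of _ "(deriv ^^ 3) \<theta> w"] conjI kernel_deriv2_has_derivative kernel_deriv3_neg)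
        auto
  qed
  thus ?thesis by simp
qed simp

lemma kinetic_has_real_derivative:
  fixes x xd :: "real \<Rightarrow> real^'n"
  assumes "is_kernel \<theta>" "\<forall>a. x t $ a > 0"
    and "(x has_vector_derivative xd t) (at t within S)"
    and "(xd has_vector_derivative xdd) (at t within S)"
  shows "((\<lambda>s. kinetic \<theta> (x s) (xd s)) has_real_derivative
      (\<Sum>a\<in>UNIV. (deriv ^^ 2) \<theta> (x t $ a) * xd t $ a * xdd $ a)
      + (1/2) * (\<Sum>a\<in>UNIV. (deriv ^^ 3) \<theta> (x t $ a) * (xd t $ a) ^ 3)) (at t within S)"
proof -
  let ?th2 = "\<lambda>a. (deriv ^^ 2) \<theta> (x t $ a)" and ?th3 = "\<lambda>a. (deriv ^^ 3) \<theta> (x t $ a)"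
  have "((\<lambda>s. (deriv ^^ 2) \<theta> (x s $ a) * (xd s $ a)\<^sup>2) has_real_derivative
      ?th2 a * (2 * xd t $ a * xdd $ a) + ?th3 a * xd t $ a * (xd t $ a)\<^sup>2) (at t within S)" for a
  proof (rule DERIV_mult')
    show "((\<lambda>s. (deriv ^^ 2) \<theta> (x s $ a)) has_real_derivative ?th3 a * xd t $ a) (at t within S)"
      using assms by (intro DERIV_chain2[OF kernel_deriv2_has_derivative]
          has_vector_derivative_vec_nth) auto
    show "((\<lambda>s. (xd s $ a)\<^sup>2) has_real_derivative 2 * xd t $ a * xdd $ a) (at t within S)"
      using DERIV_power[OF has_vector_derivative_vec_nth[OF assms(4)], where n = 2]
      by (simp add: mult_ac)
  qed
  hence kinetic_deriv: "((\<lambda>s. kinetic \<theta> (x s) (xd s)) has_real_derivative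
      (1/2) * (\<Sum>a\<in>UNIV. ?th2 a * (2 * xd t $ a * xdd $ a) + ?th3 a * xd t $ a * (xd t $ a)\<^sup>2))
      (at t within S)"
    unfolding kinetic_def by (intro DERIV_cmult DERIV_sum)
  have regroup: "(1/2) * (\<Sum>a\<in>UNIV. h2 a * (2 * y a * z a) + h3 a * y a * (y a)\<^sup>2)
      = (\<Sum>a\<in>UNIV. h2 a * y a * z a) + (1/2) * (\<Sum>a\<in>UNIV. h3 a * (y a) ^ 3)"
    for h2 h3 y z :: "'n \<Rightarrow> real"
    by (simp add: sum.distrib sum_distrib_left power2_eq_square power3_eq_cube mult_ac)
  show ?thesis using DERIV_cong[OF kinetic_deriv regroup] .
qed

lemma ID_rhs_power:
  fixes \<Phi> :: "real^'n \<Rightarrow> real"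
  assumes "\<forall>a. (deriv ^^ 2) \<theta> (x $ a) > 0" "(\<Sum>a\<in>UNIV. xd $ a) = 0"
  shows "(\<Sum>a\<in>UNIV. (deriv ^^ 2) \<theta> (x $ a) * xd $ a * ID_rhs \<theta> \<Phi> \<eta> x xd $ a)
      + (1/2) * (\<Sum>a\<in>UNIV. (deriv ^^ 3) \<theta> (x $ a) * (xd $ a) ^ 3)
    = (\<Sum>a\<in>UNIV. xd $ a * pd a \<Phi> x - \<eta> * (deriv ^^ 2) \<theta> (x $ a) * (xd $ a)\<^sup>2)"
proof -
  let ?th2 = "\<lambda>b. (deriv ^^ 2) \<theta> (x $ b)" and ?th3 = "\<lambda>b. (deriv ^^ 3) \<theta> (x $ b)"
  let ?P = "\<lambda>a. xd $ a * pd a \<Phi> x - \<eta> * ?th2 a * (xd $ a)\<^sup>2"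
  define Th where "Th = 1 / (\<Sum>b\<in>UNIV. 1 / ?th2 b)"
  define A where "A = (\<Sum>b\<in>UNIV. Th / ?th2 b * pd b \<Phi> x)"
  define S where "S = (\<Sum>b\<in>UNIV. Th / ?th2 b * ?th3 b * (xd $ b)\<^sup>2)"
  have ID: "ID_rhs \<theta> \<Phi> \<eta> x xd $ a = 1 / ?th2 a * (pd a \<Phi> x - A)
      - 1 / (2 * ?th2 a) * (?th3 a * (xd $ a)\<^sup>2 - S) - \<eta> * xd $ a" for a
    unfolding ID_rhs_def A_def S_def Th_def by (simp add: Let_def)
  have power_identity: "h * y * r + (1/2) * (k * y ^ 3) = (y * v - \<eta> * h * y\<^sup>2) + y * (S/2 - A)"
    if "h > 0" "r = 1 / h * (v - A) - 1 / (2 * h) * (k * y\<^sup>2 - S) - \<eta> * y" for h k y v r :: real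
    unfolding that(2) using that(1) by (simp add: field_simps power2_eq_square power3_eq_cube)
  have "(\<Sum>a\<in>UNIV. ?th2 a * xd $ a * ID_rhs \<theta> \<Phi> \<eta> x xd $ a) + (1/2) * (\<Sum>a\<in>UNIV. ?th3 a * (xd $ a) ^ 3)
      = (\<Sum>a\<in>UNIV. ?th2 a * xd $ a * ID_rhs \<theta> \<Phi> \<eta> x xd $ a + (1/2) * (?th3 a * (xd $ a) ^ 3))"
    by (simp add: sum.distrib sum_distrib_left)
  also have "\<dots> = (\<Sum>a\<in>UNIV. ?P a + xd $ a * (S/2 - A))"
    using power_identity[OF assms(1)[rule_format] ID] by simp
  also have "\<dots> = (\<Sum>a\<in>UNIV. ?P a) + (\<Sum>a\<in>UNIV. xd $ a) * (S/2 - A)"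
    by (simp add: sum.distrib sum_distrib_right)
  finally show ?thesis using assms(2) by simp
qed

lemma linear_minus_quadratic_le:
  fixes y v c h :: real
  assumes "c > 0" "h > 0"
  shows "y * v - c * h * y\<^sup>2 \<le> v\<^sup>2 / (4 * c * h)"
proof -
  have "0 \<le> (2 * c * h * y - v)\<^sup>2" by simp
  thus ?thesis using assms by (simp add: field_simps power2_eq_square)
qed

lemma kernel_power_summand_le:
  assumes "is_kernel \<theta>" "\<eta> > 0" "0 < z" "z \<le> 1" "\<bar>v\<bar> \<le> L"
  shows "y * v - \<eta> * (deriv ^^ 2) \<theta> z * y\<^sup>2 \<le> L\<^sup>2 / (4 * \<eta> * (deriv ^^ 2) \<theta> 1)"
proof -
  have th2: "0 < (deriv ^^ 2) \<theta> 1" "(deriv ^^ 2) \<theta> 1 \<le> (deriv ^^ 2) \<theta> z"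
    using assms by (auto intro: kernel_deriv2_pos kernel_deriv2_antimono)
  have "v\<^sup>2 \<le> L\<^sup>2" using assms(5) by (metis abs_ge_zero power2_abs power_mono)
  have "y * v - \<eta> * (deriv ^^ 2) \<theta> z * y\<^sup>2 \<le> v\<^sup>2 / (4 * \<eta> * (deriv ^^ 2) \<theta> z)"
    using assms(2) th2 by (intro linear_minus_quadratic_le) auto
  also have "\<dots> \<le> L\<^sup>2 / (4 * \<eta> * (deriv ^^ 2) \<theta> z)"
    using \<open>v\<^sup>2 \<le> L\<^sup>2\<close> assms(2) th2 by (intro divide_right_mono) auto
  also have "\<dots> \<le> L\<^sup>2 / (4 * \<eta> * (deriv ^^ 2) \<theta> 1)"
    using assms(2) th2 by (intro divide_left_mono) auto
  finally show ?thesis .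
qed

theorem lemma3p3:
  fixes \<theta> :: "real \<Rightarrow> real" and \<Phi> :: "real^'n \<Rightarrow> real" and U :: "(real^'n) set"
    and \<eta> :: real and x xd xdd :: "real \<Rightarrow> real^'n"
  assumes n: "CARD('n) \<ge> 2"
    and kern: "is_kernel \<theta>"
    and U: "open U" "std_simplex \<subseteq> U"
    and lip: "\<exists>L. L-lipschitz_on U \<Phi>"
    and smooth: "smooth_on U \<Phi>"
    and eta: "\<eta> > 0"
    and interior: "\<forall>t\<ge>0. x t \<in> std_simplex_int"
    and dx: "\<forall>t\<ge>0. (x has_vector_derivative xd t) (at t within {0..})"
    and ddx: "\<forall>t\<ge>0. (xd has_vector_derivative xdd t) (at t within {0..})"
    and ID: "\<forall>t\<ge>0. xdd t = ID_rhs \<theta> \<Phi> \<eta> (x t) (xd t)"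
  shows "\<exists>M. \<forall>t\<ge>0. \<forall>Kd.
           ((\<lambda>s. kinetic \<theta> (x s) (xd s)) has_real_derivative Kd) (at t within {0..})
           \<longrightarrow> Kd \<le> M"
proof -
  obtain L where L: "L-lipschitz_on U \<Phi>" using lip by blast
  define B where "B = L\<^sup>2 / (4 * \<eta> * (deriv ^^ 2) \<theta> 1)"
  show ?thesis
  proof (intro exI[of _ "CARD('n) * B"] allI impI)
    fix t Kd :: real
    assume t: "t \<ge> 0"
      and Kd: "((\<lambda>s. kinetic \<theta> (x s) (xd s)) has_real_derivative Kd) (at t within {0..})"
    have xt: "x t \<in> std_simplex_int" using interior t by blast
    hence pos: "\<forall>a. x t $ a > 0" by (simp add: std_simplex_int_def)
    have "x t \<in> U" using xt std_simplex_int_subset U(2) by blast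
    hence v: "\<bar>pd a \<Phi> (x t)\<bar> \<le> L" for a
      using smooth L U(1) by (intro pd_abs_le_lipschitz smooth_on_partial_differentiable)
    have "Kd = (\<Sum>a\<in>UNIV. (deriv ^^ 2) \<theta> (x t $ a) * xd t $ a * xdd t $ a)
        + (1/2) * (\<Sum>a\<in>UNIV. (deriv ^^ 3) \<theta> (x t $ a) * (xd t $ a) ^ 3)"
      using kinetic_has_real_derivative[OF kern pos dx[rule_format, OF t] ddx[rule_format, OF t]]
      by (rule has_field_derivative_unique[OF Kd _ at_within_atLeast_nontrivial[OF t]])
    also have "\<dots> = (\<Sum>a\<in>UNIV. xd t $ a * pd a \<Phi> (x t) - \<eta> * (deriv ^^ 2) \<theta> (x t $ a) * (xd t $ a)\<^sup>2)"
      unfolding ID[rule_format, OF t]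
      using pos kern velocity_sum_zero[OF interior t dx[rule_format, OF t]]
      by (intro ID_rhs_power) (auto intro: kernel_deriv2_pos)
    also have "\<dots> \<le> (\<Sum>a\<in>(UNIV :: 'n set). B)"
      unfolding B_def using kern eta pos v
      by (intro sum_mono kernel_power_summand_le std_simplex_int_component_le_1[OF xt]) auto
    finally show "Kd \<le> CARD('n) * B" by simp
  qed
qed

end
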